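(* Let $E$ be a (Hausdorff, real) topological vector space and let $A\subseteq E$ be an infinite, linearly independent, absolutely Cauchy summable subset. Then $A$ contains an infinite subset $B$ such that for every finite set $C\subseteq B$ the projection $\pi^B_C:\mathrm{span}_{\mathbb R}(B)\to\mathrm{span}_{\mathbb R}(C)$ is continuous.
   Context: $\mathrm{span}_{\mathbb R}(X)$ denotes the linear span of $X$, with the subspace topology from $E$. For a linearly independent set $B$ and $C\subseteq B$, $\pi^B_C:\mathrm{span}_{\mathbb R}(B)\to\mathrm{span}_{\mathbb R}(C)$ is the unique linear projection with kernel $\mathrm{span}_{\mathbb R}(B\setminus C)$ which is the identity on $\mathrm{span}_{\mathbb R}(C)$. A subset $A\subseteq E$ is absolutely Cauchy summable if for every neighbourhood $U$ of $0$ there is a finite $F\subseteq A$ such that the additive subgroup generated by $A\setminus F$ is contained in $U$. *)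

theory Defs
  imports "HOL-Analysis.Analysis"
begin

definition add_subgroup_gen :: "'a::ab_group_add set \<Rightarrow> 'a set" where
  "add_subgroup_gen S = \<Inter>{G. S \<subseteq> G \<and> 0 \<in> G \<and> (\<forall>x\<in>G. \<forall>y\<in>G. x - y \<in> G)}"

text \<open>Absolutely Cauchy summable: for every neighbourhood U of 0 there is a finite
  F \<subseteq> A such that the additive subgroup generated by A - F lies in U.
  (It suffices to quantify over open neighbourhoods, since the condition is monotone in U.)\<close>
definition abs_cauchy_summable :: "'a::{real_vector,topological_space} set \<Rightarrow> bool" where
  "abs_cauchy_summable A \<longleftrightarrow>
     (\<forall>U. open U \<and> 0 \<in> U \<longrightarrow> (\<exists>F. finite F \<and> F \<subseteq> A \<and> add_subgroup_gen (A - F) \<subseteq> U))"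

text \<open>The projection pi^B_C on span B (B independent, C \<subseteq> B): keep the
  coordinates in C, kill those in B - C.\<close>
definition proj_span :: "'a::real_vector set \<Rightarrow> 'a set \<Rightarrow> 'a \<Rightarrow> 'a" where
  "proj_span B C x = (\<Sum>c\<in>C. representation B x c *\<^sub>R c)"

end

theory Submission
  imports Defs
begin

text \<open>
  Say that \<open>c + X\<close> avoids a neighbourhood of \<open>0\<close> if it misses a balanced open neighbourhood
  \<open>W\<close> of \<open>0\<close>. If this holds for \<open>b + span (B - {b})\<close>, the coefficient functional of \<open>b\<close> is bounded
  by \<open>1\<close> on \<open>W \<inter> span B\<close>, hence continuous, and \<open>\<pi>\<^sup>B\<^sub>C\<close> is a finite sum of such functionals
  times vectors.

  For finite independent \<open>S\<close>, the image of the sup-norm unit sphere of \<open>\<real>\<^sup>S\<close> under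
  \<open>\<mu> \<mapsto> \<Sum>s\<in>S. \<mu> s *\<^sub>R s\<close> is compact, hence closed, and misses \<open>0\<close>; a balanced neighbourhood
  of \<open>0\<close> outside it contains no combination with a coefficient of modulus \<open>\<ge> 1\<close>. Summability
  controls the rest of \<open>A\<close>: if the subgroup generated by \<open>A - F\<close> lies in a balanced \<open>V\<close>, then
  \<open>span (A - F) \<subseteq> V + V\<close>, because real coefficients can be rounded to \<open>(1/N) \<int>\<close>. Taking
  \<open>V + V + V\<close> inside the neighbourhood for \<open>insert c S\<close>, the set \<open>c + span (S \<union> (A - F))\<close>
  avoids a neighbourhood of \<open>0\<close> for some finite \<open>F\<close>.

  A diagonal choice of \<open>c\<^sub>0, c\<^sub>1, \<dots>\<close> in \<open>A\<close>, where \<open>c\<^sub>m\<close> avoids the sets \<open>F\<close> chosen for \<open>c\<^sub>n\<close>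
  with \<open>S = {c\<^sub>0, \<dots>, c\<^bsub>n-1\<^esub>}\<close> (\<open>n < m\<close>), yields \<open>B = {c\<^sub>n}\<close> with the first property at
  every point.
\<close>

definition balanced :: "'a::real_vector set \<Rightarrow> bool" where
  "balanced W \<longleftrightarrow> (\<forall>x\<in>W. \<forall>t::real. \<bar>t\<bar> \<le> 1 \<longrightarrow> t *\<^sub>R x \<in> W)"

lemma balancedD: "balanced W \<Longrightarrow> x \<in> W \<Longrightarrow> \<bar>t\<bar> \<le> 1 \<Longrightarrow> t *\<^sub>R x \<in> W"
  unfolding balanced_def by blast

lemma balanced_uminus: "balanced W \<Longrightarrow> x \<in> W \<Longrightarrow> - x \<in> W"
  using balancedD[of W x "-1"] by simp

definition translate_avoids_nbhd :: "'a::{real_vector,topological_space} \<Rightarrow> 'a set \<Rightarrow> bool" where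
  "translate_avoids_nbhd c X \<longleftrightarrow> (\<exists>W. open W \<and> 0 \<in> W \<and> balanced W \<and> (\<forall>z\<in>X. c + z \<notin> W))"

lemma translate_avoids_nbhd_subset:
  "translate_avoids_nbhd c X \<Longrightarrow> Y \<subseteq> X \<Longrightarrow> translate_avoids_nbhd c Y"
  unfolding translate_avoids_nbhd_def by blast

lemma add_subgroup_gen_base: "x \<in> S \<Longrightarrow> x \<in> add_subgroup_gen S"
  and add_subgroup_gen_zero: "0 \<in> add_subgroup_gen S"
  and add_subgroup_gen_diff:
    "x \<in> add_subgroup_gen S \<Longrightarrow> y \<in> add_subgroup_gen S \<Longrightarrow> x - y \<in> add_subgroup_gen S"
  unfolding add_subgroup_gen_def by blast+

lemma add_subgroup_gen_add:
  "x \<in> add_subgroup_gen S \<Longrightarrow> y \<in> add_subgroup_gen S \<Longrightarrow> x + y \<in> add_subgroup_gen S"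
  using add_subgroup_gen_diff[of x S "0 - y"] add_subgroup_gen_diff[OF add_subgroup_gen_zero, of y S]
  by simp

lemma add_subgroup_gen_of_int_scaleR:
  fixes S :: "'a::real_vector set"
  assumes x: "x \<in> add_subgroup_gen S"
  shows "of_int k *\<^sub>R x \<in> add_subgroup_gen S"
proof -
  have nat: "of_nat n *\<^sub>R x \<in> add_subgroup_gen S" for n
    by (induction n) (auto simp: algebra_simps add_subgroup_gen_zero intro: add_subgroup_gen_add x)
  show ?thesis
  proof (cases "k \<ge> 0")
    case True
    then show ?thesis using nat[of "nat k"] by simp
  next
    case False
    then show ?thesis
      using add_subgroup_gen_diff[OF add_subgroup_gen_zero nat[of "nat (- k)"]] by simp
  qed
qed

lemma add_subgroup_gen_sum:
  "(\<And>t. t \<in> T \<Longrightarrow> f t \<in> add_subgroup_gen S) \<Longrightarrow> sum f T \<in> add_subgroup_gen S"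
  by (induction T rule: infinite_finite_induct) (auto simp: add_subgroup_gen_zero add_subgroup_gen_add)

lemma span_diff_representation:
  assumes "independent B" "b \<in> B" "x \<in> span B"
  shows "x - representation B x b *\<^sub>R b \<in> span (B - {b})"
proof -
  define y where "y = x - representation B x b *\<^sub>R b"
  have y: "y \<in> span B"
    unfolding y_def using assms by (simp add: span_diff span_scale span_base)
  have "representation B y b = 0"
    using assms y unfolding y_def
    by (simp add: representation_diff representation_scale representation_basis span_base span_scale)
  then have "representation B y v \<noteq> 0 \<Longrightarrow> v \<in> B - {b}" for v
    using representation_ne_zero by blast
  then have "(\<Sum>v | representation B y v \<noteq> 0. representation B y v *\<^sub>R v) \<in> span (B - {b})"
    by (intro span_sum span_scale span_base) blast
  then show ?thesis
    using sum_nonzero_representation_eq[OF assms(1) y] unfolding y_def by simp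
qed

section \<open>Diagonal choice of an infinite subset\<close>

lemma infinite_avoiding_sequence:
  fixes A :: "'a set" and P :: "'a set \<Rightarrow> 'a \<Rightarrow> 'a set \<Rightarrow> bool"
  assumes infA: "infinite A"
    and exF: "\<And>S c. finite S \<Longrightarrow> S \<subseteq> A \<Longrightarrow> c \<in> A \<Longrightarrow> c \<notin> S \<Longrightarrow> \<exists>F. finite F \<and> P S c F"
  obtains c :: "nat \<Rightarrow> 'a" and F :: "nat \<Rightarrow> 'a set"
  where "\<And>n. c n \<in> A" "inj c" "\<And>n. P (c ` {..<n}) (c n) (F n)" "\<And>m n. n < m \<Longrightarrow> c m \<notin> F n"
proof -
  define G where "G S c = (SOME F. finite F \<and> P S c F)" for S c
  have G: "finite (G S c) \<and> P S c (G S c)" if "finite S" "S \<subseteq> A" "c \<in> A" "c \<notin> S" for S c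
    unfolding G_def using exF[OF that] by (rule someI_ex)
  \<comment> \<open>the state after \<open>n\<close> steps: the points chosen so far and the union of their sets \<open>G\<close>\<close>
  define pick where "pick Q = (SOME c. c \<in> A - (fst Q \<union> snd Q))" for Q :: "'a set \<times> 'a set"
  define grow where "grow Q = (insert (pick Q) (fst Q), snd Q \<union> G (fst Q) (pick Q))" for Q
  define Q where "Q n = (grow ^^ n) ({}, {})" for n
  define c where "c n = pick (Q n)" for n
  have Q_Suc: "Q (Suc n) = (insert (c n) (fst (Q n)), snd (Q n) \<union> G (fst (Q n)) (c n))" for n
    by (simp add: Q_def c_def grow_def)
  have fst_Q: "fst (Q n) = c ` {..<n}" for n
    by (induction n) (simp_all add: Q_Suc lessThan_Suc, simp add: Q_def)
  have pick: "pick R \<in> A - (fst R \<union> snd R)" if "finite (fst R \<union> snd R)" for R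
  proof -
    have "\<exists>c. c \<in> A - (fst R \<union> snd R)"
      using infA that by (metis Diff_infinite_finite ex_in_conv finite.emptyI)
    then show ?thesis
      unfolding pick_def by (rule someI_ex)
  qed
  have Q_inv: "finite (snd (Q n)) \<and> fst (Q n) \<subseteq> A" for n
  proof (induction n)
    case 0
    then show ?case by (simp add: Q_def)
  next
    case (Suc n)
    then have "c n \<in> A - (fst (Q n) \<union> snd (Q n))"
      unfolding c_def by (intro pick) (simp add: fst_Q)
    with Suc G[of "fst (Q n)" "c n"] show ?case
      by (simp add: Q_Suc fst_Q)
  qed
  have c: "c n \<in> A - (fst (Q n) \<union> snd (Q n))" for n
    unfolding c_def using Q_inv by (intro pick) (simp add: fst_Q)
  have snd_Q_mono: "snd (Q m) \<subseteq> snd (Q n)" if "m \<le> n" for m n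
    using lift_Suc_mono_le[of "\<lambda>n. snd (Q n)", OF _ that] by (simp add: Q_Suc)
  show thesis
  proof (rule that)
    show "c n \<in> A" for n
      using c by blast
    show "inj c"
    proof (rule linorder_injI)
      show "c m \<noteq> c n" if "m < n" for m n
      proof -
        have "c m \<in> fst (Q n)"
          using that by (simp add: fst_Q)
        then show ?thesis
          using c[of n] by auto
      qed
    qed
    show "P (c ` {..<n}) (c n) (G (c ` {..<n}) (c n))" for n
      using G[of "c ` {..<n}" "c n"] c[of n] Q_inv[of n] by (simp add: fst_Q)
    show "c m \<notin> G (c ` {..<n}) (c n)" if "n < m" for m n
      using c[of m] snd_Q_mono[of "Suc n" m] that by (auto simp: Q_Suc fst_Q)
  qed
qed

lemma infinite_subset_eventually_avoiding:
  fixes A :: "'a set" and P :: "'a set \<Rightarrow> 'a \<Rightarrow> 'a set \<Rightarrow> bool"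
  assumes "infinite A"
    and "\<And>S c. finite S \<Longrightarrow> S \<subseteq> A \<Longrightarrow> c \<in> A \<Longrightarrow> c \<notin> S \<Longrightarrow> \<exists>F. finite F \<and> P S c F"
  obtains B where "B \<subseteq> A" "infinite B" "\<And>b. b \<in> B \<Longrightarrow> \<exists>S F. P S b F \<and> B - {b} \<subseteq> S \<union> (A - F)"
proof (rule infinite_avoiding_sequence[of A P])
  fix c :: "nat \<Rightarrow> 'a" and F :: "nat \<Rightarrow> 'a set"
  assume c: "\<And>n. c n \<in> A" "inj c" "\<And>n. P (c ` {..<n}) (c n) (F n)"
    and avoid: "\<And>m n. n < m \<Longrightarrow> c m \<notin> F n"
  have "range c - {c n} \<subseteq> c ` {..<n} \<union> (A - F n)" for n
  proof
    fix x assume "x \<in> range c - {c n}"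
    then obtain m where "x = c m" "m \<noteq> n" by blast
    then show "x \<in> c ` {..<n} \<union> (A - F n)"
      using c(1) avoid[of n m] by (cases "m < n") auto
  qed
  then have "\<exists>S F. P S b F \<and> range c - {b} \<subseteq> S \<union> (A - F)" if "b \<in> range c" for b
    using that c(3) by blast
  moreover have "range c \<subseteq> A" "infinite (range c)"
    using c(1) range_inj_infinite[OF c(2)] by auto
  ultimately show thesis
    by (rule that[rotated 2])
qed (use assms in auto)

section \<open>The sup-norm unit sphere\<close>

definition sup_norm_sphere :: "'i set \<Rightarrow> ('i \<Rightarrow> real) set" where
  "sup_norm_sphere S = {\<mu> \<in> PiE S (\<lambda>_. {-1..1}). \<exists>s\<in>S. \<mu> s \<in> {-1, 1}}"

lemma compactin_sup_norm_sphere: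
  assumes "finite S"
  shows "compactin (product_topology (\<lambda>_. euclideanreal) S) (sup_norm_sphere S)"
proof -
  let ?P = "product_topology (\<lambda>_. euclideanreal) S"
  have "closedin ?P {\<mu> \<in> topspace ?P. \<mu> s \<in> {-1, 1}}" if "s \<in> S" for s
    by (intro closedin_continuous_map_preimage[OF continuous_map_product_projection[OF that]])
      (simp add: closed_insert)
  then have "closedin ?P (\<Union>s\<in>S. {\<mu> \<in> topspace ?P. \<mu> s \<in> {-1, 1}})"
    using assms by (intro closedin_Union) auto
  then have "compactin ?P (PiE S (\<lambda>_. {-1..1}) \<inter> (\<Union>s\<in>S. {\<mu> \<in> topspace ?P. \<mu> s \<in> {-1, 1}}))"
    by (intro compact_Int_closedin) (simp add: compactin_PiE)
  moreover have "PiE S (\<lambda>_. {-1..1}) \<inter> (\<Union>s\<in>S. {\<mu> \<in> topspace ?P. \<mu> s \<in> {-1, 1}})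
      = sup_norm_sphere S"
    unfolding sup_norm_sphere_def by auto
  ultimately show ?thesis by simp
qed

lemma sup_norm_sphere_rescale:
  fixes \<mu> :: "'i \<Rightarrow> real"
  assumes finS: "finite S" and large: "\<exists>s\<in>S. 1 \<le> \<bar>\<mu> s\<bar>"
  obtains m where "m \<ge> 1" "restrict (\<lambda>s. \<mu> s / m) S \<in> sup_norm_sphere S"
proof -
  define m where "m = Max ((\<lambda>s. \<bar>\<mu> s\<bar>) ` S)"
  have m_ge: "\<bar>\<mu> s\<bar> \<le> m" if "s \<in> S" for s
    unfolding m_def using finS that by simp
  have "m \<in> (\<lambda>s. \<bar>\<mu> s\<bar>) ` S"
    unfolding m_def using finS large by (intro Max_in) auto
  then obtain s0 where s0: "s0 \<in> S" "\<bar>\<mu> s0\<bar> = m" by blast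
  have "m \<ge> 1"
    using large m_ge by fastforce
  moreover have "restrict (\<lambda>s. \<mu> s / m) S \<in> PiE S (\<lambda>_. {-1..1})"
    using m_ge \<open>m \<ge> 1\<close> by (force simp: abs_le_iff field_simps)
  moreover have "restrict (\<lambda>s. \<mu> s / m) S s0 \<in> {-1, 1}"
    using s0 \<open>m \<ge> 1\<close> by (cases "\<mu> s0 \<ge> 0") auto
  ultimately show thesis
    using that s0(1) unfolding sup_norm_sphere_def by blast
qed

section \<open>Hausdorff topological vector spaces\<close>

locale hausdorff_tvs =
  assumes continuous_add: "continuous_on UNIV (\<lambda>p::'a::{real_vector,t2_space} \<times> 'a. fst p + snd p)"
    and continuous_scaleR: "continuous_on UNIV (\<lambda>p::real \<times> 'a. fst p *\<^sub>R snd p)"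
begin

lemma continuous_map_add_tvs:
  fixes f g :: "'b \<Rightarrow> 'a"
  assumes "continuous_map X euclidean f" "continuous_map X euclidean g"
  shows "continuous_map X euclidean (\<lambda>x. f x + g x)"
  using continuous_map_compose[OF continuous_map_pairedI[OF assms], of euclidean "\<lambda>p. fst p + snd p"]
    continuous_add by (simp add: o_def prod_topology_euclidean)

lemma continuous_map_scaleR_tvs:
  fixes f :: "'b \<Rightarrow> real" and g :: "'b \<Rightarrow> 'a"
  assumes "continuous_map X euclidean f" "continuous_map X euclidean g"
  shows "continuous_map X euclidean (\<lambda>x. f x *\<^sub>R g x)"
  using continuous_map_compose[OF continuous_map_pairedI[OF assms], of euclidean "\<lambda>p. fst p *\<^sub>R snd p"]
    continuous_scaleR by (simp add: o_def prod_topology_euclidean)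

lemma continuous_map_sum_tvs:
  fixes f :: "'i \<Rightarrow> 'b \<Rightarrow> 'a"
  assumes "\<And>i. i \<in> I \<Longrightarrow> continuous_map X euclidean (f i)"
  shows "continuous_map X euclidean (\<lambda>x. \<Sum>i\<in>I. f i x)"
  using assms by (induction I rule: infinite_finite_induct) (auto intro: continuous_map_add_tvs)

lemma open_vimage_scaleR_diff:
  fixes W :: "'a set"
  assumes "open W"
  shows "open ((\<lambda>y. c *\<^sub>R (y - d)) -` W)"
proof -
  have "continuous_map euclidean euclidean (\<lambda>y::'a. c *\<^sub>R (y + - d))"
    by (intro continuous_map_scaleR_tvs continuous_map_add_tvs) auto
  then show ?thesis
    using assms by (simp add: open_vimage)
qed

lemma balanced_open_nbhd:
  fixes N :: "'a set"
  assumes "open N" "0 \<in> N"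
  obtains W where "open W" "0 \<in> W" "W \<subseteq> N" "balanced W"
proof -
  have "open ((\<lambda>p::real \<times> 'a. fst p *\<^sub>R snd p) -` N)"
    using open_vimage[OF assms(1) continuous_scaleR] .
  moreover have "(0, 0) \<in> (\<lambda>p::real \<times> 'a. fst p *\<^sub>R snd p) -` N"
    using assms by simp
  ultimately obtain R V where RV: "open R" "open V" "(0, 0) \<in> R \<times> V"
      "R \<times> V \<subseteq> (\<lambda>p::real \<times> 'a. fst p *\<^sub>R snd p) -` N"
    by (rule open_prod_elim)
  have "0 \<in> R" using RV(3) by simp
  then obtain d where d: "d > 0" "ball 0 d \<subseteq> R"
    using RV(1) open_contains_ball by blast
  define W where "W = (\<Union>s\<in>{s. 0 < \<bar>s\<bar> \<and> \<bar>s\<bar> < d}. (\<lambda>x. (1 / s) *\<^sub>R x) -` V)"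
  have "open W"
    unfolding W_def using open_vimage_scaleR_diff[OF RV(2), of _ 0] by (intro open_UN ballI) simp
  moreover have "0 \<in> W"
    unfolding W_def using RV(3) d(1) by (intro UN_I[of "d / 2"]) auto
  moreover have "W \<subseteq> N"
  proof
    fix x assume "x \<in> W"
    then obtain s where s: "0 < \<bar>s\<bar>" "\<bar>s\<bar> < d" "(1 / s) *\<^sub>R x \<in> V"
      unfolding W_def by auto
    then have "(s, (1 / s) *\<^sub>R x) \<in> R \<times> V"
      using d(2) by (auto simp: dist_real_def)
    then have "s *\<^sub>R ((1 / s) *\<^sub>R x) \<in> N"
      using RV(4) by auto
    with s show "x \<in> N" by simp
  qed
  moreover have "balanced W"
    unfolding balanced_def
  proof (intro ballI allI impI)
    fix x and t :: real assume "x \<in> W" "\<bar>t\<bar> \<le> 1"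
    then obtain s where s: "0 < \<bar>s\<bar>" "\<bar>s\<bar> < d" "(1 / s) *\<^sub>R x \<in> V"
      unfolding W_def by auto
    show "t *\<^sub>R x \<in> W"
    proof (cases "t = 0")
      case True
      then show ?thesis using \<open>0 \<in> W\<close> by simp
    next
      case False
      have "\<bar>t\<bar> * \<bar>s\<bar> \<le> \<bar>s\<bar>"
        using \<open>\<bar>t\<bar> \<le> 1\<close> by (simp add: mult_left_le_one_le)
      then have "\<bar>t * s\<bar> < d"
        using s(2) by (simp add: abs_mult)
      moreover have "(1 / (t * s)) *\<^sub>R (t *\<^sub>R x) = (1 / s) *\<^sub>R x"
        using False by simp
      ultimately show ?thesis
        unfolding W_def using s False by (intro UN_I[of "t * s"]) simp_all
    qed
  qed
  ultimately show ?thesis by (rule that)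
qed

lemma open_nbhd_add_subset:
  fixes N :: "'a set"
  assumes "open N" "0 \<in> N"
  obtains V where "open V" "0 \<in> V" "\<And>x y. x \<in> V \<Longrightarrow> y \<in> V \<Longrightarrow> x + y \<in> N"
proof -
  have "open ((\<lambda>p::'a \<times> 'a. fst p + snd p) -` N)"
    using open_vimage[OF assms(1) continuous_add] .
  moreover have "(0, 0) \<in> (\<lambda>p::'a \<times> 'a. fst p + snd p) -` N"
    using assms by simp
  ultimately obtain R V where RV: "open R" "open V" "(0, 0) \<in> R \<times> V"
      "R \<times> V \<subseteq> (\<lambda>p::'a \<times> 'a. fst p + snd p) -` N"
    by (rule open_prod_elim)
  show ?thesis
  proof (rule that[of "R \<inter> V"])
    show "x + y \<in> N" if "x \<in> R \<inter> V" "y \<in> R \<inter> V" for x y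
    proof -
      have "(x, y) \<in> R \<times> V" using that by simp
      then show ?thesis using RV(4) by auto
    qed
  qed (use RV in auto)
qed

lemma balanced_open_nbhd_add3:
  fixes N :: "'a set"
  assumes "open N" "0 \<in> N"
  obtains V where "open V" "0 \<in> V" "balanced V"
    "\<And>x y z. x \<in> V \<Longrightarrow> y \<in> V \<Longrightarrow> z \<in> V \<Longrightarrow> x + y + z \<in> N"
proof -
  obtain V1 where V1: "open V1" "0 \<in> V1" "\<And>x y. x \<in> V1 \<Longrightarrow> y \<in> V1 \<Longrightarrow> x + y \<in> N"
    using open_nbhd_add_subset[OF assms] by blast
  obtain V2 where V2: "open V2" "0 \<in> V2" "\<And>x y. x \<in> V2 \<Longrightarrow> y \<in> V2 \<Longrightarrow> x + y \<in> V1"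
    using open_nbhd_add_subset[OF V1(1,2)] by blast
  obtain V where "open V" "0 \<in> V" "V \<subseteq> V1 \<inter> V2" "balanced V"
    using balanced_open_nbhd[of "V1 \<inter> V2"] V1(1,2) V2(1,2) by blast
  then show ?thesis
    using that V1(3) V2(3) by (metis IntE subsetD)
qed

lemma small_coefficients_nbhd:
  fixes T :: "'a set" and U :: "'a set"
  assumes "finite T" "open U" "0 \<in> U"
  obtains \<delta> where "\<delta> > 0" "\<And>\<mu>. (\<And>t. t \<in> T \<Longrightarrow> \<bar>\<mu> t\<bar> < \<delta>) \<Longrightarrow> (\<Sum>t\<in>T. \<mu> t *\<^sub>R t) \<in> U"
  using assms(1,2,3)
proof (induction T arbitrary: U thesis rule: finite_induct)
  case empty
  then show ?case using empty.prems(1)[of 1] empty.prems(3) by simp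
next
  case (insert a T)
  obtain V where V: "open V" "0 \<in> V" "\<And>x y. x \<in> V \<Longrightarrow> y \<in> V \<Longrightarrow> x + y \<in> U"
    using open_nbhd_add_subset[OF insert.prems(2,3)] by blast
  obtain \<delta>1 where \<delta>1: "\<delta>1 > 0"
      "\<And>\<mu>. (\<And>t. t \<in> T \<Longrightarrow> \<bar>\<mu> t\<bar> < \<delta>1) \<Longrightarrow> (\<Sum>t\<in>T. \<mu> t *\<^sub>R t) \<in> V"
    using insert.IH[OF _ V(1,2)] by blast
  have "continuous_map euclidean euclidean (\<lambda>r::real. r *\<^sub>R a)"
    by (intro continuous_map_scaleR_tvs) auto
  then have "open ((\<lambda>r::real. r *\<^sub>R a) -` V)"
    using V(1) by (simp add: open_vimage)
  moreover have "0 \<in> (\<lambda>r::real. r *\<^sub>R a) -` V"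
    using V(2) by simp
  ultimately obtain \<delta>2 where \<delta>2: "\<delta>2 > 0" "ball 0 \<delta>2 \<subseteq> (\<lambda>r::real. r *\<^sub>R a) -` V"
    using open_contains_ball by blast
  show ?case
  proof (rule insert.prems(1)[of "min \<delta>1 \<delta>2"])
    fix \<mu> assume \<mu>: "\<And>t. t \<in> insert a T \<Longrightarrow> \<bar>\<mu> t\<bar> < min \<delta>1 \<delta>2"
    have "\<mu> a *\<^sub>R a \<in> V"
      using \<mu>[of a] \<delta>2(2) by (auto simp: dist_real_def)
    moreover have "(\<Sum>t\<in>T. \<mu> t *\<^sub>R t) \<in> V"
      using \<mu> by (intro \<delta>1(2)) auto
    ultimately show "(\<Sum>t\<in>insert a T. \<mu> t *\<^sub>R t) \<in> U"
      using insert.hyps V(3) by simp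
  qed (use \<delta>1 \<delta>2 in simp)
qed

lemma span_subset_balanced_plus_nbhd:
  fixes P V U :: "'a set"
  assumes bal: "balanced V" and sub: "add_subgroup_gen P \<subseteq> V"
    and U: "open U" "0 \<in> U" and y: "y \<in> span P"
  obtains v where "v \<in> V" "y - v \<in> U"
proof -
  obtain T r where T: "finite T" "T \<subseteq> P" and y_eq: "y = (\<Sum>t\<in>T. r t *\<^sub>R t)"
    using y unfolding span_explicit by blast
  obtain \<delta> where \<delta>: "\<delta> > 0"
      "\<And>\<mu>. (\<And>t. t \<in> T \<Longrightarrow> \<bar>\<mu> t\<bar> < \<delta>) \<Longrightarrow> (\<Sum>t\<in>T. \<mu> t *\<^sub>R t) \<in> U"
    using small_coefficients_nbhd[OF T(1) U] by blast
  obtain N :: nat where N: "1 / \<delta> < N"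
    using reals_Archimedean2 by blast
  have "0 < 1 / \<delta>"
    using \<delta>(1) by simp
  with N have N_pos: "real N > 0"
    by linarith
  \<comment> \<open>round the coefficients of \<open>y\<close> down to \<open>(1/N) \<int>\<close>\<close>
  define k where "k t = \<lfloor>N * r t\<rfloor>" for t
  define v where "v = (1 / N) *\<^sub>R (\<Sum>t\<in>T. of_int (k t) *\<^sub>R t)"
  have "(\<Sum>t\<in>T. of_int (k t) *\<^sub>R t) \<in> add_subgroup_gen P"
    using T(2) by (intro add_subgroup_gen_sum add_subgroup_gen_of_int_scaleR add_subgroup_gen_base) blast
  then have "v \<in> V"
    unfolding v_def using bal sub N_pos by (intro balancedD) auto
  moreover have "y - v \<in> U"
  proof -
    have close: "\<bar>r t - k t / N\<bar> < \<delta>" for t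
    proof -
      have floor: "k t \<le> N * r t" "N * r t < k t + 1"
        unfolding k_def by linarith+
      have "r t - k t / N = (N * r t - k t) / N"
        using N_pos by (simp add: field_simps)
      then have "0 \<le> r t - k t / N" "r t - k t / N < 1 / N"
        using floor N_pos by (simp_all add: divide_strict_right_mono)
      moreover have "1 / N < \<delta>"
        using N N_pos \<delta>(1) by (simp add: field_simps)
      ultimately show ?thesis by linarith
    qed
    have "y - v = (\<Sum>t\<in>T. (r t - k t / N) *\<^sub>R t)"
      unfolding y_eq v_def scaleR_sum_right sum_subtractf[symmetric]
      by (intro sum.cong refl) (simp add: scaleR_diff_left)
    then show ?thesis
      using \<delta>(2)[OF close] by simp
  qed
  ultimately show ?thesis using that by blast
qed

lemma independent_nbhd_avoids_large_coefficients:
  fixes S :: "'a set"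
  assumes finS: "finite S" and indS: "independent S"
  obtains W where "open W" "0 \<in> W" "balanced W"
    "\<And>\<mu>. \<exists>s\<in>S. 1 \<le> \<bar>\<mu> s\<bar> \<Longrightarrow> (\<Sum>s\<in>S. \<mu> s *\<^sub>R s) \<notin> W"
proof -
  define \<Phi> where "\<Phi> \<mu> = (\<Sum>s\<in>S. \<mu> s *\<^sub>R s)" for \<mu> :: "'a \<Rightarrow> real"
  have "continuous_map (product_topology (\<lambda>_. euclideanreal) S) euclidean \<Phi>"
    unfolding \<Phi>_def
    by (intro continuous_map_sum_tvs continuous_map_scaleR_tvs continuous_map_product_projection) auto
  with compactin_sup_norm_sphere[OF finS] have "compactin euclidean (\<Phi> ` sup_norm_sphere S)"
    by (rule image_compactin)
  then have "closed (\<Phi> ` sup_norm_sphere S)"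
    by (simp add: compact_imp_closed)
  moreover have "0 \<notin> \<Phi> ` sup_norm_sphere S"
  proof
    assume "0 \<in> \<Phi> ` sup_norm_sphere S"
    then obtain \<mu> where "\<mu> \<in> sup_norm_sphere S" "\<Phi> \<mu> = 0" by (metis imageE)
    then obtain s where "s \<in> S" "\<mu> s \<noteq> 0"
      unfolding sup_norm_sphere_def by fastforce
    with \<open>\<Phi> \<mu> = 0\<close> have "dependent S"
      unfolding \<Phi>_def dependent_finite[OF finS] by blast
    with indS show False by blast
  qed
  ultimately obtain W where W: "open W" "0 \<in> W" "W \<subseteq> - \<Phi> ` sup_norm_sphere S" "balanced W"
    using balanced_open_nbhd[of "- \<Phi> ` sup_norm_sphere S"] by blast
  have "\<Phi> \<mu> \<notin> W" if large: "\<exists>s\<in>S. 1 \<le> \<bar>\<mu> s\<bar>" for \<mu>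
  proof
    assume "\<Phi> \<mu> \<in> W"
    obtain m where m: "m \<ge> 1" "restrict (\<lambda>s. \<mu> s / m) S \<in> sup_norm_sphere S"
      using sup_norm_sphere_rescale[OF finS large] by blast
    have "\<Phi> (restrict (\<lambda>s. \<mu> s / m) S) = (1 / m) *\<^sub>R \<Phi> \<mu>"
      unfolding \<Phi>_def scaleR_sum_right by (intro sum.cong) auto
    moreover have "(1 / m) *\<^sub>R \<Phi> \<mu> \<in> W"
      using W(4) \<open>\<Phi> \<mu> \<in> W\<close> m(1) by (intro balancedD) auto
    ultimately show False
      using W(3) m(2) by (metis ComplD imageI subsetD)
  qed
  then show ?thesis
    using that W(1,2,4) unfolding \<Phi>_def by blast
qed

lemma abs_cauchy_summable_translate_avoids_nbhd:
  fixes A S :: "'a set"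
  assumes summ: "abs_cauchy_summable A" and indA: "independent A"
    and S: "finite S" "S \<subseteq> A" and c: "c \<in> A" "c \<notin> S"
  shows "\<exists>F. finite F \<and> translate_avoids_nbhd c (span (S \<union> (A - F)))"
proof -
  have "finite (insert c S)" "independent (insert c S)"
    using S c(1) independent_mono[OF indA, of "insert c S"] by auto
  then obtain W0 where W0: "open W0" "0 \<in> W0" "balanced W0"
      "\<And>\<mu>. \<exists>s\<in>insert c S. 1 \<le> \<bar>\<mu> s\<bar> \<Longrightarrow> (\<Sum>s\<in>insert c S. \<mu> s *\<^sub>R s) \<notin> W0"
    by (rule independent_nbhd_avoids_large_coefficients) (rule that)
  obtain V where V: "open V" "0 \<in> V" "balanced V"
      "\<And>x y z. x \<in> V \<Longrightarrow> y \<in> V \<Longrightarrow> z \<in> V \<Longrightarrow> x + y + z \<in> W0"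
    by (rule balanced_open_nbhd_add3[OF W0(1,2)]) (rule that)
  obtain F where F: "finite F" "add_subgroup_gen (A - F) \<subseteq> V"
    using summ V(1,2) unfolding abs_cauchy_summable_def by blast
  have "\<forall>z\<in>span (S \<union> (A - F)). c + z \<notin> V"
  proof (intro ballI notI)
    fix z assume "z \<in> span (S \<union> (A - F))" "c + z \<in> V"
    obtain x y where xy: "z = x + y" "x \<in> span S" "y \<in> span (A - F)"
      using \<open>z \<in> span (S \<union> (A - F))\<close> unfolding span_Un by blast
    obtain v where v: "v \<in> V" "y - v \<in> V"
      using span_subset_balanced_plus_nbhd[OF V(3) F(2) V(1,2) xy(3)] by blast
    have "(c + z) + - v + - (y - v) \<in> W0"
      using \<open>c + z \<in> V\<close> v by (intro V(4) balanced_uminus[OF V(3)])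
    moreover have "(c + z) + - v + - (y - v) = c + x"
      using xy(1) by (simp add: algebra_simps)
    moreover obtain u where u: "x = (\<Sum>s\<in>S. u s *\<^sub>R s)"
      using xy(2) unfolding span_finite[OF S(1)] by blast
    have "(\<Sum>s\<in>S. (u(c := 1)) s *\<^sub>R s) = x"
      unfolding u using c(2) by (intro sum.cong) auto
    then have "c + x = (\<Sum>s\<in>insert c S. (u(c := 1)) s *\<^sub>R s)"
      using S(1) c(2) by simp
    moreover have "\<exists>s\<in>insert c S. 1 \<le> \<bar>(u(c := 1)) s\<bar>"
      by simp
    ultimately show False
      using W0(4) by metis
  qed
  with F(1) V(1,2,3) show ?thesis
    unfolding translate_avoids_nbhd_def by blast
qed

lemma continuous_on_linear_functional_bounded_on_nbhd:
  fixes X :: "'a set" and f :: "'a \<Rightarrow> real"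
  assumes f_diff: "\<And>x y. x \<in> X \<Longrightarrow> y \<in> X \<Longrightarrow> f (y - x) = f y - f x"
    and f_scaleR: "\<And>r x. x \<in> X \<Longrightarrow> f (r *\<^sub>R x) = r * f x"
    and X: "subspace X" and W: "open W" "0 \<in> W"
    and bounded: "\<And>x. x \<in> X \<Longrightarrow> x \<in> W \<Longrightarrow> \<bar>f x\<bar> < 1"
  shows "continuous_on X f"
  unfolding continuous_on_topological
proof (intro ballI allI impI)
  fix x0 G assume "x0 \<in> X" "open G" "f x0 \<in> G"
  then obtain e where e: "e > 0" "ball (f x0) e \<subseteq> G"
    by (meson openE)
  define T where "T = (\<lambda>y. (1 / e) *\<^sub>R (y - x0)) -` W"
  have "f y \<in> G" if "y \<in> X" "y \<in> T" for y
  proof -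
    have "y - x0 \<in> X"
      using X \<open>x0 \<in> X\<close> that(1) by (simp add: subspace_diff)
    then have "\<bar>(1 / e) * (f y - f x0)\<bar> < 1"
      using bounded[of "(1 / e) *\<^sub>R (y - x0)"] that X
      by (simp add: T_def f_scaleR f_diff \<open>x0 \<in> X\<close> subspace_scale)
    then have "dist (f y) (f x0) < e"
      using e(1) by (simp add: dist_real_def abs_mult field_simps)
    then show ?thesis
      using e(2) by (auto simp: dist_commute)
  qed
  moreover have "open T" "x0 \<in> T"
    unfolding T_def using W by (simp_all add: open_vimage_scaleR_diff)
  ultimately show "\<exists>T. open T \<and> x0 \<in> T \<and> (\<forall>y\<in>X. y \<in> T \<longrightarrow> f y \<in> G)"
    by blast
qed

lemma continuous_on_representation:
  fixes B :: "'a set"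
  assumes indB: "independent B" and b: "b \<in> B"
    and "translate_avoids_nbhd b (span (B - {b}))"
  shows "continuous_on (span B) (\<lambda>x. representation B x b)"
proof -
  obtain W where W: "open W" "0 \<in> W" "balanced W" "\<forall>z\<in>span (B - {b}). b + z \<notin> W"
    using assms(3) unfolding translate_avoids_nbhd_def by blast
  show ?thesis
  proof (rule continuous_on_linear_functional_bounded_on_nbhd[OF _ _ subspace_span W(1,2)])
    fix x assume x: "x \<in> span B" "x \<in> W"
    show "\<bar>representation B x b\<bar> < 1"
    proof (rule ccontr)
      define r where "r = representation B x b"
      assume "\<not> \<bar>representation B x b\<bar> < 1"
      then have r: "1 \<le> \<bar>r\<bar>" unfolding r_def by simp
      have "(1 / r) *\<^sub>R x \<in> W"
        using W(3) x(2) r by (intro balancedD) (auto simp: abs_div_pos)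
      moreover have "(1 / r) *\<^sub>R x = b + (1 / r) *\<^sub>R (x - r *\<^sub>R b)"
        using r by (auto simp: algebra_simps)
      moreover have "(1 / r) *\<^sub>R (x - r *\<^sub>R b) \<in> span (B - {b})"
        unfolding r_def by (intro span_scale span_diff_representation indB b x(1))
      ultimately show False
        using W(4) by metis
    qed
  qed (simp_all add: indB representation_diff representation_scale)
qed

lemma continuous_on_proj_span:
  fixes B C :: "'a set"
  assumes "\<And>c. c \<in> C \<Longrightarrow> continuous_on (span B) (\<lambda>x. representation B x c)"
  shows "continuous_on (span B) (proj_span B C)"
proof -
  have "continuous_map (top_of_set (span B)) euclidean (\<lambda>x. \<Sum>c\<in>C. representation B x c *\<^sub>R c)"
    by (intro continuous_map_sum_tvs continuous_map_scaleR_tvs) (simp_all add: assms)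
  then show ?thesis
    unfolding proj_span_def by simp
qed

lemma infinite_subset_continuous_coordinates:
  fixes A :: "'a set"
  assumes "infinite A" "independent A" "abs_cauchy_summable A"
  obtains B where "B \<subseteq> A" "infinite B"
    "\<And>b. b \<in> B \<Longrightarrow> continuous_on (span B) (\<lambda>x. representation B x b)"
proof (rule infinite_subset_eventually_avoiding[of A
      "\<lambda>S c F. translate_avoids_nbhd c (span (S \<union> (A - F)))"])
  show "infinite A" by fact
  show "\<exists>F. finite F \<and> translate_avoids_nbhd c (span (S \<union> (A - F)))"
    if "finite S" "S \<subseteq> A" "c \<in> A" "c \<notin> S" for S c
    using abs_cauchy_summable_translate_avoids_nbhd[OF assms(3,2) that] .
  fix B assume B: "B \<subseteq> A" "infinite B"
    "\<And>b. b \<in> B \<Longrightarrow> \<exists>S F. translate_avoids_nbhd b (span (S \<union> (A - F))) \<and> B - {b} \<subseteq> S \<union> (A - F)"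
  have "independent B"
    using assms(2) B(1) by (rule independent_mono)
  have "continuous_on (span B) (\<lambda>x. representation B x b)" if b: "b \<in> B" for b
  proof (rule continuous_on_representation[OF \<open>independent B\<close> b])
    obtain S F where avoid: "translate_avoids_nbhd b (span (S \<union> (A - F)))"
      and sub: "B - {b} \<subseteq> S \<union> (A - F)"
      using B(3)[OF b] by (elim exE conjE) (rule that)
    show "translate_avoids_nbhd b (span (B - {b}))"
      using avoid span_mono[OF sub] by (rule translate_avoids_nbhd_subset)
  qed
  then show thesis
    by (rule that[OF B(1,2)])
qed

end

theorem theorem9p7:
  fixes A :: "'a::{real_vector, t2_space} set"
  assumes add_cont: "continuous_on UNIV (\<lambda>p::'a \<times> 'a. fst p + snd p)"
    and scale_cont: "continuous_on UNIV (\<lambda>p::real \<times> 'a. fst p *\<^sub>R snd p)"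
    and "infinite A"
    and "independent A"
    and "abs_cauchy_summable A"
  shows "\<exists>B\<subseteq>A. infinite B \<and>
           (\<forall>C. finite C \<and> C \<subseteq> B \<longrightarrow> continuous_on (span B) (proj_span B C))"
proof -
  interpret hausdorff_tvs
    using add_cont scale_cont by unfold_locales
  obtain B where B: "B \<subseteq> A" "infinite B"
      "\<And>b. b \<in> B \<Longrightarrow> continuous_on (span B) (\<lambda>x. representation B x b)"
    by (rule infinite_subset_continuous_coordinates[OF assms(3-5)]) (rule that)
  have "continuous_on (span B) (proj_span B C)" if "C \<subseteq> B" for C
    using B(3) that by (intro continuous_on_proj_span) blast
  with B(1,2) show ?thesis
    by blast
qed

end
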